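(* Let $\mathscr H$ be a Hilbert module over $A=M_d(\mathbb C)$. There exist vectors $g,h\in\mathscr H$ with $[g,h]=I$ if and only if the modular dimension of $\mathscr H$ is at least $d$.
   Context: A Hilbert module over $A=M_d(\mathbb C)$ is a left $A$-module $\mathscr H$ with a map $[\cdot,\cdot]:\mathscr H\times\mathscr H\to A$ such that for all $f,g,h\in\mathscr H$, $a\in A$: $[f+g,h]=[f,h]+[g,h]$; $[af,g]=a[f,g]$; $[g,f]=[f,g]^*$; $[f,f]\ge0$, and $[f,f]=0$ iff $f=0$; and $\mathscr H$ is complete in the norm $f\mapsto\|[f,f]\|^{1/2}$. A family $\{f_\alpha\}\subset\mathscr H$ is modular orthonormal if $[f_\alpha,f_\beta]=0$ for $\alpha\ne\beta$ and each $[f_\alpha,f_\alpha]$ is a minimal (rank-one) projection in $A$. A modular base is a maximal modular orthonormal family; all modular bases of $\mathscr H$ have the same cardinality, called the modular dimension of $\mathscr H$. $I$ denotes the $d\times d$ identity matrix. *)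

theory Defs
  imports "HOL-Analysis.Analysis"
begin

text \<open>The C*-algebra A = M_d(C) is modelled as complex^'d^'d with 'd a finite type, d = CARD('d).\<close>

definition adjm :: "complex^'d^'d \<Rightarrow> complex^'d^'d" where
  "adjm A = (\<chi> i j. cnj (A $ j $ i))"

definition psd :: "complex^'d::finite^'d \<Rightarrow> bool" where
  "psd A \<longleftrightarrow> (\<forall>v::complex^'d. (\<Sum>i\<in>UNIV. cnj (v $ i) * (A *v v) $ i) \<in> \<real>
                                   \<and> 0 \<le> Re (\<Sum>i\<in>UNIV. cnj (v $ i) * (A *v v) $ i))"

definition mnorm :: "complex^'d::finite^'d \<Rightarrow> real" where
  "mnorm A = onorm (\<lambda>v::complex^'d. A *v v)"

definition projection :: "complex^'d::finite^'d \<Rightarrow> bool" where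
  "projection P \<longleftrightarrow> P ** P = P \<and> adjm P = P"

definition minimal_projection :: "complex^'d::finite^'d \<Rightarrow> bool" where
  "minimal_projection P \<longleftrightarrow> projection P \<and> P \<noteq> 0 \<and>
     (\<forall>Q. projection Q \<and> P ** Q = Q \<longrightarrow> Q = 0 \<or> Q = P)"

definition hnorm :: "('h \<Rightarrow> 'h \<Rightarrow> complex^'d::finite^'d) \<Rightarrow> 'h \<Rightarrow> real" where
  "hnorm ip f = sqrt (mnorm (ip f f))"

definition hilbert_module ::
  "(complex^'d::finite^'d \<Rightarrow> 'h::ab_group_add \<Rightarrow> 'h) \<Rightarrow> ('h \<Rightarrow> 'h \<Rightarrow> complex^'d^'d) \<Rightarrow> bool" where
  "hilbert_module act ip \<longleftrightarrow>
     \<comment> \<open>left A-module\<close>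
     (\<forall>a f g. act a (f + g) = act a f + act a g) \<and>
     (\<forall>a b f. act (a + b) f = act a f + act b f) \<and>
     (\<forall>a b f. act (a ** b) f = act a (act b f)) \<and>
     (\<forall>f. act (mat 1) f = f) \<and>
     \<comment> \<open>A-valued inner product\<close>
     (\<forall>f g h. ip (f + g) h = ip f h + ip g h) \<and>
     (\<forall>a f g. ip (act a f) g = a ** ip f g) \<and>
     (\<forall>f g. ip g f = adjm (ip f g)) \<and>
     (\<forall>f. psd (ip f f)) \<and>
     (\<forall>f. ip f f = 0 \<longleftrightarrow> f = 0) \<and>
     \<comment> \<open>completeness\<close>
     (\<forall>s::nat \<Rightarrow> 'h.
        (\<forall>e>0. \<exists>N. \<forall>m\<ge>N. \<forall>n\<ge>N. hnorm ip (s m - s n) < e) \<longrightarrow>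
        (\<exists>l. \<forall>e>0. \<exists>N. \<forall>n\<ge>N. hnorm ip (s n - l) < e))"

definition modular_orthonormal :: "('h \<Rightarrow> 'h \<Rightarrow> complex^'d::finite^'d) \<Rightarrow> 'h set \<Rightarrow> bool" where
  "modular_orthonormal ip F \<longleftrightarrow>
     (\<forall>f\<in>F. \<forall>g\<in>F. f \<noteq> g \<longrightarrow> ip f g = 0) \<and> (\<forall>f\<in>F. minimal_projection (ip f f))"

definition modular_base :: "('h \<Rightarrow> 'h \<Rightarrow> complex^'d::finite^'d) \<Rightarrow> 'h set \<Rightarrow> bool" where
  "modular_base ip B \<longleftrightarrow> modular_orthonormal ip B \<and>
     (\<forall>F. modular_orthonormal ip F \<and> B \<subseteq> F \<longrightarrow> F = B)"

definition ecard :: "'a set \<Rightarrow> enat" where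
  "ecard S = (if finite S then enat (card S) else \<infinity>)"

text \<open>Modular dimension: cardinality of a modular base (all have the same cardinality).\<close>
definition modular_dim :: "('h \<Rightarrow> 'h \<Rightarrow> complex^'d::finite^'d) \<Rightarrow> enat" where
  "modular_dim ip = ecard (SOME B. modular_base ip B)"

end

theory Submission
  imports Defs
begin

text \<open>
  Minimal projections of \<open>M\<^sub>d(\<complex>)\<close> are exactly the rank-one projections \<open>u u\<^sup>*\<close> with \<open>|u| = 1\<close>.
  Relative to a finite modular base \<open>B\<close> every vector expands as \<open>x = \<Sum>\<^sub>f [x,f] f\<close>: otherwise a
  multiple of the residual has a rank-one projection as inner square and is orthogonal to \<open>B\<close>,
  contradicting maximality. Hence \<open>[g,h] = I\<close> writes \<open>I\<close> as a sum of \<open>|B|\<close> rank-one matrices,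
  so \<open>|B| \<ge> d\<close>. Conversely, from \<open>d\<close> base elements \<open>f\<^sub>i\<close> with \<open>[f\<^sub>i,f\<^sub>i] = u\<^sub>i u\<^sub>i\<^sup>*\<close> the vector
  \<open>g = \<Sum>\<^sub>i (e\<^sub>i u\<^sub>i\<^sup>*) f\<^sub>i\<close> has \<open>[g,g] = \<Sum>\<^sub>i e\<^sub>i e\<^sub>i\<^sup>* = I\<close>.
  Both directions hold for every modular base.
\<close>

section \<open>Vectors and rank-one matrices\<close>

definition cinner :: "complex^'n::finite \<Rightarrow> complex^'n \<Rightarrow> complex" where
  "cinner x y = (\<Sum>i\<in>UNIV. cnj (x $ i) * y $ i)"

definition outer :: "complex^'n::finite \<Rightarrow> complex^'n \<Rightarrow> complex^'n^'n" where
  "outer x y = (\<chi> i j. x $ i * cnj (y $ j))"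

lemma psd_iff_cinner: "psd A \<longleftrightarrow> (\<forall>v. cinner v (A *v v) \<in> \<real> \<and> 0 \<le> Re (cinner v (A *v v)))"
  by (simp add: psd_def cinner_def)

lemma adjm_adjm [simp]: "adjm (adjm A) = A"
  by (simp add: adjm_def vec_eq_iff)

lemma adjm_mult: "adjm (A ** B) = adjm B ** adjm A"
  by (simp add: adjm_def vec_eq_iff matrix_matrix_mult_def mult.commute)

lemma adjm_add: "adjm (A + B) = adjm A + adjm B"
  by (simp add: adjm_def vec_eq_iff)

lemma adjm_zero [simp]: "adjm 0 = 0"
  by (simp add: adjm_def vec_eq_iff)

lemma adjm_outer: "adjm (outer x y) = outer y x"
  by (simp add: adjm_def outer_def vec_eq_iff mult.commute)

lemma cinner_commute: "cinner y x = cnj (cinner x y)"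
  by (simp add: cinner_def mult.commute)

lemma cinner_add_left: "cinner (x + y) z = cinner x z + cinner y z"
  by (simp add: cinner_def sum.distrib ring_distribs)

lemma cinner_add_right: "cinner z (x + y) = cinner z x + cinner z y"
  by (simp add: cinner_def sum.distrib ring_distribs)

lemma cinner_scale_left: "cinner (c *s x) z = cnj c * cinner x z"
  by (simp add: cinner_def sum_distrib_left mult_ac)

lemma cinner_scale_right: "cinner z (c *s x) = c * cinner z x"
  by (simp add: cinner_def sum_distrib_left mult_ac)

lemma cinner_adjm: "cinner x (M *v y) = cinner (adjm M *v x) y"
proof -
  have "cinner x (M *v y) = (\<Sum>i\<in>UNIV. \<Sum>j\<in>UNIV. cnj (x $ i) * M $ i $ j * y $ j)"
    by (simp add: cinner_def matrix_vector_mult_def sum_distrib_left mult_ac)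
  also have "\<dots> = (\<Sum>j\<in>UNIV. \<Sum>i\<in>UNIV. cnj (x $ i) * M $ i $ j * y $ j)"
    by (rule sum.swap)
  also have "\<dots> = cinner (adjm M *v x) y"
    by (simp add: cinner_def adjm_def matrix_vector_mult_def sum_distrib_left sum_distrib_right
        mult_ac)
  finally show ?thesis .
qed

lemma cinner_self: "cinner x x = of_real (\<Sum>i\<in>UNIV. (cmod (x $ i))\<^sup>2)"
  unfolding cinner_def of_real_sum
  by (rule sum.cong) (simp_all add: complex_mult_cnj cmod_power2 mult.commute)

lemma cinner_axis: "cinner (axis i 1) x = x $ i"
proof -
  have "cnj (axis i 1 $ k) * x $ k = (if k = i then x $ i else 0)" for k
    by (simp add: axis_def)
  then show ?thesis
    by (simp add: cinner_def)
qed

lemma exists_unit_vector: "\<exists>e :: complex^'n::finite. cinner e e = 1"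
  by (metis cinner_axis axis_nth)

lemma matrix_vector_mult_scale: "(A :: complex^'n::finite^'m::finite) *v (c *s x) = c *s (A *v x)"
  by (rule vec.linear_scale[OF matrix_vector_mul_linear_gen])

lemma matrix_vector_mult_axis: "(A *v axis j 1) $ i = A $ i $ j"
  by (simp add: matrix_vector_mult_def axis_def if_distrib cong: if_cong)

lemma sum_matrix_vector_mult: "sum A S *v x = (\<Sum>i\<in>S. A i *v x)"
  by (induct S rule: infinite_finite_induct) (simp_all add: matrix_vector_mult_add_rdistrib)

lemma outer_zero_right [simp]: "outer x 0 = 0"
  by (simp add: outer_def vec_eq_iff)

lemma outer_mult_outer: "outer x y ** outer u v = outer (cinner y u *s x) v"
  by (simp add: outer_def cinner_def vec_eq_iff matrix_matrix_mult_def sum_distrib_left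
      sum_distrib_right mult_ac)

lemma matrix_mult_outer: "A ** outer x y = outer (A *v x) y"
  by (simp add: outer_def vec_eq_iff matrix_matrix_mult_def matrix_vector_mult_def
      sum_distrib_right sum_distrib_left mult_ac)

lemma outer_mult_matrix: "outer x y ** A = outer x (adjm A *v y)"
  by (simp add: outer_def adjm_def vec_eq_iff matrix_matrix_mult_def matrix_vector_mult_def
      sum_distrib_left mult_ac)

lemma outer_mult_vector: "outer x y *v z = cinner y z *s x"
  by (simp add: outer_def cinner_def vec_eq_iff matrix_vector_mult_def sum_distrib_left
      sum_distrib_right mult_ac)

lemma sum_outer_axis: "(\<Sum>i\<in>UNIV. outer (axis i 1) (axis i 1)) = (mat 1 :: complex^'n::finite^'n)"
proof -
  have "outer (axis i 1) (axis i 1) $ j $ k = (if i = j then mat 1 $ j $ k else 0 :: complex)"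
    for i j k :: 'n
    by (simp add: outer_def axis_def mat_def)
  then show ?thesis
    by (simp add: vec_eq_iff sum_component)
qed

lemma card_ge_if_sum_outer_eq_mat1:
  fixes x y :: "'a \<Rightarrow> complex^'n::finite"
  assumes "finite S" and "(\<Sum>i\<in>S. outer (x i) (y i)) = mat 1"
  shows "CARD('n) \<le> card S"
proof -
  have "v \<in> vec.span (x ` S)" for v
  proof -
    have "v = (\<Sum>i\<in>S. outer (x i) (y i)) *v v"
      using assms(2) by simp
    also have "\<dots> = (\<Sum>i\<in>S. cinner (y i) v *s x i)"
      by (simp add: sum_matrix_vector_mult outer_mult_vector)
    also have "\<dots> \<in> vec.span (x ` S)"
      by (intro vec.span_sum vec.span_scale vec.span_base) auto
    finally show ?thesis .
  qed
  then have "card (cart_basis :: (complex^'n) set) \<le> card (x ` S)"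
    using vec.independent_span_bound[OF finite_imageI[OF assms(1)] independent_cart_basis]
    by blast
  also have "\<dots> \<le> card S"
    using assms(1) by (rule card_image_le)
  finally show ?thesis
    by (simp add: card_cart_basis)
qed

section \<open>Minimal projections are rank one\<close>

lemma projection_outer: "cinner u u = 1 \<Longrightarrow> projection (outer u u)"
  by (simp add: projection_def outer_mult_outer adjm_outer)

lemma outer_self_neq_0:
  assumes "cinner u u = 1"
  shows "outer u u \<noteq> 0"
proof
  assume "outer u u = 0"
  then have "u = 0"
    by (metis assms outer_mult_vector matrix_vector_mult_0 vector_smult_lid)
  with assms show False
    by (simp add: cinner_def)
qed

lemma minimal_projection_outer:
  assumes u: "cinner u u = 1"
  shows "minimal_projection (outer u u)"
  unfolding minimal_projection_def
proof (intro conjI allI impI)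
  show "projection (outer u u)"
    using u by (rule projection_outer)
  show "outer u u \<noteq> 0"
    using u by (rule outer_self_neq_0)
  fix Q
  assume "projection Q \<and> outer u u ** Q = Q"
  then have QQ: "Q ** Q = Q" and Qa: "adjm Q = Q" and uQ: "outer u u ** Q = Q"
    by (auto simp: projection_def)
  define c where "c = cinner u (Q *v u)"
  have Q: "Q = outer u (Q *v u)"
    using uQ by (metis outer_mult_matrix Qa)
  have Qu: "Q *v u = c *s u"
  proof -
    have "Q *v u = outer u u *v (Q *v u)"
      using uQ by (metis matrix_vector_mul_assoc)
    then show ?thesis
      by (simp add: outer_mult_vector c_def)
  qed
  have "c * c = cinner u (Q *v (Q *v u))"
    by (simp add: Qu matrix_vector_mult_scale cinner_scale_right u)
  also have "\<dots> = c"
    by (simp add: matrix_vector_mul_assoc QQ c_def)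
  finally have "c * c = c" .
  then have "c = 0 \<or> c = 1"
    by (metis mult_cancel_right1 mult_zero_left)
  moreover have "Q = outer u (c *s u)"
    using Q unfolding Qu .
  ultimately show "Q = 0 \<or> Q = outer u u"
    by auto
qed

lemma projection_psd:
  assumes "projection P"
  shows "psd P"
proof -
  have "cinner v (P *v v) = cinner (P *v v) (P *v v)" for v
    using assms by (metis cinner_adjm matrix_vector_mul_assoc projection_def)
  then show ?thesis
    unfolding psd_iff_cinner cinner_self
    by (metis Re_complex_of_real Reals_of_real sum_nonneg zero_le_power2)
qed

lemma quadratic_form_eq_0_imp_eq_0:
  assumes "\<And>w. cinner w (Q *v w) = 0"
  shows "Q = 0"
proof -
  have polarization: "cinner x (Q *v y) = 0" for x y
  proof -
    have "cinner x (Q *v y) + cinner y (Q *v x) = 0"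
      using assms[of "x + y"] assms[of x] assms[of y]
      by (simp add: matrix_vector_right_distrib cinner_add_left cinner_add_right add.commute)
    moreover have "\<i> * (cinner x (Q *v y) - cinner y (Q *v x)) = 0"
      using assms[of "x + \<i> *s y"] assms[of x] assms[of y]
      by (simp add: matrix_vector_mult_scale cinner_add_left cinner_add_right cinner_scale_left
          cinner_scale_right algebra_simps)
    ultimately show ?thesis
      by simp
  qed
  show ?thesis
    using polarization[of "axis i 1" "axis j 1" for i j]
    by (simp add: vec_eq_iff cinner_axis matrix_vector_mult_axis)
qed

lemma psd_exists_unit:
  assumes "psd Q" and "Q \<noteq> 0"
  obtains w where "cinner w (Q *v w) = 1"
proof -
  obtain v where v: "cinner v (Q *v v) \<noteq> 0"
    using assms(2) quadratic_form_eq_0_imp_eq_0 by blast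
  moreover have "cinner v (Q *v v) \<in> \<real>" and "0 \<le> Re (cinner v (Q *v v))"
    using assms(1) by (simp_all add: psd_iff_cinner)
  ultimately obtain r where r: "cinner v (Q *v v) = of_real r" and "r > 0"
    by (metis Reals_cases Re_complex_of_real less_eq_real_def of_real_0)
  define w where "w = of_real (1 / sqrt r) *s v"
  have "cinner w (Q *v w) = 1"
    using \<open>r > 0\<close>
    by (simp add: w_def matrix_vector_mult_scale cinner_scale_left cinner_scale_right r
        flip: of_real_mult)
  then show thesis
    by (rule that)
qed

lemma minimal_projection_imp_outer:
  assumes "minimal_projection P"
  obtains u where "cinner u u = 1" and "P = outer u u"
proof -
  have P: "projection P" "P \<noteq> 0"
    and minimal: "\<And>Q. projection Q \<Longrightarrow> P ** Q = Q \<Longrightarrow> Q = 0 \<or> Q = P"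
    using assms by (auto simp: minimal_projection_def)
  then have PP: "P ** P = P" and Pa: "adjm P = P"
    by (auto simp: projection_def)
  obtain w where w: "cinner w (P *v w) = 1"
    using psd_exists_unit[OF projection_psd[OF P(1)] P(2)] .
  define u where "u = P *v w"
  have Pu: "P *v u = u"
    by (simp add: u_def matrix_vector_mul_assoc PP)
  have uu: "cinner u u = 1"
    using w by (metis Pu Pa cinner_adjm u_def)
  have "P ** outer u u = outer u u"
    by (simp add: matrix_mult_outer Pu)
  then have "outer u u = P"
    using minimal[OF projection_outer[OF uu]] outer_self_neq_0[OF uu] by auto
  with uu that show thesis
    by simp
qed

section \<open>Hilbert modules over matrix algebras\<close>

lemma modular_orthonormal_iff_pairwise:
  "modular_orthonormal ip F \<longleftrightarrow>
     pairwise (\<lambda>f g. ip f g = 0) F \<and> (\<forall>f\<in>F. minimal_projection (ip f f))"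
  by (simp add: modular_orthonormal_def pairwise_def)

lemma modular_base_exists: "\<exists>B. modular_base ip B"
proof -
  have "\<Union>C \<in> {F. modular_orthonormal ip F}" if "C \<in> chains {F. modular_orthonormal ip F}" for C
  proof -
    from that have "C \<subseteq> {F. modular_orthonormal ip F}" and "chain\<^sub>\<subseteq> C"
      by (auto simp: chains_def)
    then show ?thesis
      using pairwise_chain_Union[of C "\<lambda>f g. ip f g = 0"]
      by (auto simp: modular_orthonormal_iff_pairwise)
  qed
  then obtain M where "modular_orthonormal ip M"
    and "\<forall>F. modular_orthonormal ip F \<and> M \<subseteq> F \<longrightarrow> F = M"
    using Zorn_Lemma[of "{F. modular_orthonormal ip F}"] by blast
  then show ?thesis
    unfolding modular_base_def by blast
qed

lemma ecard_ge_CARD_obtains_inj: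
  fixes S :: "'b set"
  assumes "enat CARD('a::finite) \<le> ecard S"
  obtains \<phi> :: "'a::finite \<Rightarrow> 'b" where "inj \<phi>" and "range \<phi> \<subseteq> S"
proof -
  obtain T where "finite T" and "CARD('a) \<le> card T" and "T \<subseteq> S"
  proof (cases "finite S")
    case True
    then show ?thesis
      using assms that by (auto simp: ecard_def)
  next
    case False
    then show ?thesis
      using infinite_arbitrarily_large[OF False, of "CARD('a)"] that by auto
  qed
  then show thesis
    using card_le_inj[of "UNIV :: 'a set" T] that by auto
qed

context
  fixes act :: "complex^'d::finite^'d \<Rightarrow> 'h::ab_group_add \<Rightarrow> 'h"
    and ip :: "'h \<Rightarrow> 'h \<Rightarrow> complex^'d^'d"
  assumes hilbert: "hilbert_module act ip"
begin

lemma ip_add_left: "ip (f + g) h = ip f h + ip g h"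
  using hilbert unfolding hilbert_module_def by blast

lemma ip_act_left: "ip (act a f) g = a ** ip f g"
  using hilbert unfolding hilbert_module_def by blast

lemma ip_swap: "ip g f = adjm (ip f g)"
  using hilbert unfolding hilbert_module_def by blast

lemma ip_self_psd: "psd (ip f f)"
  using hilbert unfolding hilbert_module_def by blast

lemma ip_self_eq_0_iff: "ip f f = 0 \<longleftrightarrow> f = 0"
  using hilbert unfolding hilbert_module_def by blast

lemma ip_add_right: "ip h (f + g) = ip h f + ip h g"
  by (metis ip_swap ip_add_left adjm_add)

lemma ip_act_right: "ip f (act a g) = ip f g ** adjm a"
  by (metis ip_swap ip_act_left adjm_mult adjm_adjm)

lemma ip_zero_left [simp]: "ip 0 g = 0"
  using ip_add_left[of 0 0 g] by simp

lemma ip_zero_right [simp]: "ip g 0 = 0"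
  using ip_add_right[of g 0 0] by simp

lemma ip_diff_left: "ip (f - g) h = ip f h - ip g h"
  using ip_add_left[of "f - g" g h] by (simp add: algebra_simps)

lemma ip_diff_right: "ip h (f - g) = ip h f - ip h g"
  using ip_add_right[of h "f - g" g] by (simp add: algebra_simps)

lemma ip_sum_left: "ip (sum F S) g = (\<Sum>x\<in>S. ip (F x) g)"
  by (induct S rule: infinite_finite_induct) (simp_all add: ip_add_left)

lemma ip_sum_right: "ip g (sum F S) = (\<Sum>x\<in>S. ip g (F x))"
  by (induct S rule: infinite_finite_induct) (simp_all add: ip_add_right)

lemma act_ip_self:
  assumes "projection (ip f f)"
  shows "act (ip f f) f = f"
proof -
  have "ip (f - act (ip f f) f) (f - act (ip f f) f) = 0"
    using assms
    by (simp add: ip_diff_left ip_diff_right ip_act_left ip_act_right matrix_mul_assoc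
        projection_def)
  then show ?thesis
    by (simp add: ip_self_eq_0_iff)
qed

lemma ip_mult_ip_self:
  assumes "projection (ip f f)"
  shows "ip x f ** ip f f = ip x f"
  by (metis act_ip_self[OF assms] ip_act_right assms projection_def)

lemma ip_sum_act_left:
  assumes "finite I" and "j \<in> I"
    and orth: "\<And>i. i \<in> I \<Longrightarrow> i \<noteq> j \<Longrightarrow> ip (\<phi> i) (\<phi> j) = 0"
  shows "ip (\<Sum>i\<in>I. act (a i) (\<phi> i)) (\<phi> j) = a j ** ip (\<phi> j) (\<phi> j)"
proof -
  have "ip (\<Sum>i\<in>I. act (a i) (\<phi> i)) (\<phi> j) =
      (\<Sum>i\<in>I. if i = j then a j ** ip (\<phi> j) (\<phi> j) else 0)"
    unfolding ip_sum_left ip_act_left using orth by (intro sum.cong) auto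
  also have "\<dots> = a j ** ip (\<phi> j) (\<phi> j)"
    using assms(1,2) by simp
  finally show ?thesis .
qed

lemma ip_sum_act_sum_act:
  assumes "finite I"
    and orth: "\<And>i j. i \<in> I \<Longrightarrow> j \<in> I \<Longrightarrow> i \<noteq> j \<Longrightarrow> ip (\<phi> i) (\<phi> j) = 0"
  shows "ip (\<Sum>i\<in>I. act (a i) (\<phi> i)) (\<Sum>j\<in>I. act (b j) (\<phi> j)) =
      (\<Sum>j\<in>I. a j ** ip (\<phi> j) (\<phi> j) ** adjm (b j))"
  unfolding ip_sum_right ip_act_right
proof (rule sum.cong)
  fix j
  assume "j \<in> I"
  then show "ip (\<Sum>i\<in>I. act (a i) (\<phi> i)) (\<phi> j) ** adjm (b j) =
      a j ** ip (\<phi> j) (\<phi> j) ** adjm (b j)"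
    using ip_sum_act_left[OF assms(1)] orth by simp
qed simp

lemma exists_act_minimal_projection:
  assumes "y \<noteq> 0"
  obtains a where "minimal_projection (ip (act a y) (act a y))"
proof -
  obtain w where w: "cinner w (ip y y *v w) = 1"
    using psd_exists_unit[OF ip_self_psd] assms ip_self_eq_0_iff by blast
  obtain e :: "complex^'d" where e: "cinner e e = 1"
    using exists_unit_vector by blast
  have hermitian: "adjm (ip y y) = ip y y"
    using ip_swap[of y y] by simp
  have "ip (act (outer e w) y) (act (outer e w) y) = outer e w ** ip y y ** outer w e"
    by (simp add: ip_act_left ip_act_right adjm_outer matrix_mul_assoc)
  also have "\<dots> = outer e (ip y y *v w) ** outer w e"
    by (simp add: outer_mult_matrix hermitian)
  also have "\<dots> = outer e e"
    using w cinner_commute[of "ip y y *v w" w] by (simp add: outer_mult_outer)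
  finally show thesis
    using minimal_projection_outer[OF e] that by metis
qed

lemma modular_orthonormal_insert:
  assumes "modular_orthonormal ip F" and "minimal_projection (ip z z)"
    and "\<And>f. f \<in> F \<Longrightarrow> ip z f = 0"
  shows "modular_orthonormal ip (insert z F)"
proof -
  have "ip f z = 0" if "f \<in> F" for f
    using assms(3)[OF that] ip_swap[of f z] by simp
  then show ?thesis
    using assms unfolding modular_orthonormal_def by auto
qed

lemma modular_base_expansion:
  assumes B: "modular_base ip B" and "finite B"
  shows "x = (\<Sum>f\<in>B. act (ip x f) f)"
proof (rule ccontr)
  have orthonormal: "modular_orthonormal ip B"
    and maximal: "\<And>F. modular_orthonormal ip F \<Longrightarrow> B \<subseteq> F \<Longrightarrow> F = B"
    using B by (auto simp: modular_base_def)
  define y where "y = x - (\<Sum>f\<in>B. act (ip x f) f)"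
  assume "x \<noteq> (\<Sum>f\<in>B. act (ip x f) f)"
  then obtain a where minimal: "minimal_projection (ip (act a y) (act a y))"
    using exists_act_minimal_projection[of y] by (auto simp: y_def)
  have "ip y f = 0" if "f \<in> B" for f
  proof -
    have "ip (\<Sum>f'\<in>B. act (ip x f') f') f = ip x f ** ip f f"
      using ip_sum_act_left[OF \<open>finite B\<close> that, of "\<lambda>f. f"] orthonormal that
      by (simp add: modular_orthonormal_def)
    also have "\<dots> = ip x f"
      using ip_mult_ip_self orthonormal that
      by (simp add: modular_orthonormal_def minimal_projection_def)
    finally show ?thesis
      by (simp add: y_def ip_diff_left)
  qed
  then have "modular_orthonormal ip (insert (act a y) B)"
    using modular_orthonormal_insert[OF orthonormal minimal] by (simp add: ip_act_left)
  moreover have "act a y \<notin> B"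
    using \<open>\<And>f. f \<in> B \<Longrightarrow> ip y f = 0\<close> minimal
    by (auto simp: ip_act_left minimal_projection_def)
  ultimately show False
    using maximal by blast
qed

lemma ecard_modular_base_ge_if_ip_eq_mat1:
  assumes B: "modular_base ip B" and "ip g h = mat 1"
  shows "enat CARD('d) \<le> ecard B"
proof (cases "finite B")
  case False
  then show ?thesis
    by (simp add: ecard_def)
next
  case True
  have minimal: "\<And>f. f \<in> B \<Longrightarrow> minimal_projection (ip f f)"
    using B by (simp add: modular_base_def modular_orthonormal_def)
  then have "\<forall>f\<in>B. \<exists>v. ip f f = outer v v"
    by (metis minimal_projection_imp_outer)
  then obtain u where u: "\<And>f. f \<in> B \<Longrightarrow> ip f f = outer (u f) (u f)"
    by metis
  have "ip g f ** adjm (ip h f) = outer (ip g f *v u f) (ip h f *v u f)" if "f \<in> B" for f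
  proof -
    have "ip g f = ip g f ** outer (u f) (u f)"
      by (metis ip_mult_ip_self minimal[OF that] u[OF that] minimal_projection_def)
    then show ?thesis
      by (metis matrix_mult_outer outer_mult_matrix adjm_adjm)
  qed
  then have "(\<Sum>f\<in>B. outer (ip g f *v u f) (ip h f *v u f)) =
      (\<Sum>f\<in>B. ip g f ** adjm (ip h f))"
    by simp
  also have "\<dots> = ip g (\<Sum>f\<in>B. act (ip h f) f)"
    by (simp add: ip_sum_right ip_act_right)
  also have "\<dots> = mat 1"
    using \<open>ip g h = mat 1\<close> modular_base_expansion[OF B True, of h] by simp
  finally have "CARD('d) \<le> card B"
    by (rule card_ge_if_sum_outer_eq_mat1[OF True])
  then show ?thesis
    using True by (simp add: ecard_def)
qed

lemma exists_ip_self_eq_mat1: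
  assumes F: "modular_orthonormal ip F" and "enat CARD('d) \<le> ecard F"
  shows "\<exists>g. ip g g = mat 1"
proof -
  obtain \<phi> :: "'d \<Rightarrow> 'h" where "inj \<phi>" and "range \<phi> \<subseteq> F"
    using ecard_ge_CARD_obtains_inj assms(2) by blast
  then have "\<phi> i \<in> F" for i
    by blast
  then have orth: "\<And>i j. i \<noteq> j \<Longrightarrow> ip (\<phi> i) (\<phi> j) = 0"
    and minimal: "\<And>i. minimal_projection (ip (\<phi> i) (\<phi> i))"
    using F \<open>inj \<phi>\<close> unfolding modular_orthonormal_def by (metis inj_eq)+
  have "\<forall>i. \<exists>v. cinner v v = 1 \<and> ip (\<phi> i) (\<phi> i) = outer v v"
    by (metis minimal minimal_projection_imp_outer)
  then obtain u where u: "\<And>i. cinner (u i) (u i) = 1 \<and> ip (\<phi> i) (\<phi> i) = outer (u i) (u i)"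
    by metis
  define g where "g = (\<Sum>i\<in>UNIV. act (outer (axis i 1) (u i)) (\<phi> i))"
  have "ip g g = (\<Sum>i\<in>UNIV.
      outer (axis i 1) (u i) ** ip (\<phi> i) (\<phi> i) ** adjm (outer (axis i 1) (u i)))"
    unfolding g_def using orth by (intro ip_sum_act_sum_act) simp_all
  also have "\<dots> = (\<Sum>i\<in>UNIV. outer (axis i 1) (axis i 1))"
    by (simp add: u adjm_outer outer_mult_outer)
  also have "\<dots> = mat 1"
    by (rule sum_outer_axis)
  finally show ?thesis
    by blast
qed

end

theorem mainTheorem7:
  fixes act :: "complex^'d::finite^'d \<Rightarrow> 'h::ab_group_add \<Rightarrow> 'h"
    and ip :: "'h \<Rightarrow> 'h \<Rightarrow> complex^'d^'d"
  assumes "hilbert_module act ip"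
  shows "(\<exists>g h. ip g h = mat 1) \<longleftrightarrow> enat CARD('d) \<le> modular_dim ip"
proof -
  define B where "B = (SOME B. modular_base ip B)"
  have B: "modular_base ip B"
    unfolding B_def using modular_base_exists by (rule someI_ex)
  then have "modular_orthonormal ip B"
    by (simp add: modular_base_def)
  moreover have "modular_dim ip = ecard B"
    by (simp add: modular_dim_def B_def)
  ultimately show ?thesis
    using ecard_modular_base_ge_if_ip_eq_mat1[OF assms B]
      exists_ip_self_eq_mat1[OF assms] by metis
qed

end
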